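(* Suppose the e-values are valid, i.e. $\mathbb{E}[e_t\mid\mathcal{F}_{t-1}]\le1$ a.s. whenever $\theta_t=0$. Fix $d\in(0,1]$ and define the oracle estimate of the decaying-memory FDP $$\mathrm{mem\text{-}FDP}^*(t)=\sum_{j\in\mathcal{H}_0(t)}\frac{\alpha_j}{d\,R^{\mathrm d}_{j-1}+1}.$$ Then for every $t\ge1$: if $\mathbb{E}[\mathrm{mem\text{-}FDP}^*(t)]\le\alpha$, then $\mathrm{mem\text{-}FDR}(t)\le\alpha$.
   Context: Let $\alpha\in(0,1)$ be a target level. Hypotheses are indexed by $t=1,2,\dots$; $\theta_t\in\{0,1\}$ is a fixed (non-random) indicator with $\theta_t=0$ iff the $t$-th null hypothesis is true. $e_1,e_2,\dots$ are nonnegative random variables (e-values). Testing levels $\alpha_1,\alpha_2,\dots$ are nonnegative random variables and the decisions are $\delta_t=\mathbb{1}\{e_t\ge 1/\alpha_t\}$ (with $\delta_t=0$ when $\alpha_t=0$). Let $\mathcal{F}_t=\sigma(\delta_1,\dots,\delta_t)$, $\mathcal{F}_0$ trivial; each $\alpha_t$ is required to be $\mathcal{F}_{t-1}$-measurable. $\mathcal{H}_0(t)=\{j\le t:\theta_j=0\}$. For a decay parameter $d\in(0,1]$, $R^{\mathrm d}_t=\sum_{j=1}^t d^{t-j}\delta_j$ with $R^{\mathrm d}_0=0$, and the decaying-memory FDR is $\mathrm{mem\text{-}FDR}(t)=\mathbb{E}\big[\sum_{j\in\mathcal{H}_0(t)}d^{t-j}\delta_j\big/R^{\mathrm d}_t\big]$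 with the convention $0/0=0$. *)

theory Defs
  imports "HOL-Probability.Probability"
begin

definition delta :: "(nat \<Rightarrow> 'a \<Rightarrow> real) \<Rightarrow> (nat \<Rightarrow> 'a \<Rightarrow> real) \<Rightarrow> nat \<Rightarrow> 'a \<Rightarrow> real" where
  "delta e alpha t x = (if alpha t x \<noteq> 0 \<and> e t x \<ge> 1 / alpha t x then 1 else 0)"

definition filt :: "'a measure \<Rightarrow> (nat \<Rightarrow> 'a \<Rightarrow> real) \<Rightarrow> (nat \<Rightarrow> 'a \<Rightarrow> real) \<Rightarrow> nat \<Rightarrow> 'a measure" where
  "filt M e alpha t = sigma (space M)
     {{x \<in> space M. delta e alpha j x = 1} | j. j \<in> {1..t}}"

definition Rd :: "real \<Rightarrow> (nat \<Rightarrow> 'a \<Rightarrow> real) \<Rightarrow> (nat \<Rightarrow> 'a \<Rightarrow> real) \<Rightarrow> nat \<Rightarrow> 'a \<Rightarrow> real" where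
  "Rd d e alpha t x = (\<Sum>j\<in>{1..t}. d ^ (t - j) * delta e alpha j x)"

definition H0 :: "(nat \<Rightarrow> nat) \<Rightarrow> nat \<Rightarrow> nat set" where
  "H0 theta t = {j \<in> {1..t}. theta j = 0}"

definition memFDP_star :: "real \<Rightarrow> (nat \<Rightarrow> nat) \<Rightarrow> (nat \<Rightarrow> 'a \<Rightarrow> real) \<Rightarrow> (nat \<Rightarrow> 'a \<Rightarrow> real) \<Rightarrow> nat \<Rightarrow> 'a \<Rightarrow> real" where
  "memFDP_star d theta e alpha t x =
     (\<Sum>j\<in>H0 theta t. alpha j x / (d * Rd d e alpha (j - 1) x + 1))"

(* decaying-memory FDP; division by zero gives 0 in Isabelle, matching 0/0 = 0 *)
definition memFDP :: "real \<Rightarrow> (nat \<Rightarrow> nat) \<Rightarrow> (nat \<Rightarrow> 'a \<Rightarrow> real) \<Rightarrow> (nat \<Rightarrow> 'a \<Rightarrow> real) \<Rightarrow> nat \<Rightarrow> 'a \<Rightarrow> real" where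
  "memFDP d theta e alpha t x =
     (\<Sum>j\<in>H0 theta t. d ^ (t - j) * delta e alpha j x) / Rd d e alpha t x"

definition memFDR :: "'a measure \<Rightarrow> real \<Rightarrow> (nat \<Rightarrow> nat) \<Rightarrow> (nat \<Rightarrow> 'a \<Rightarrow> real) \<Rightarrow> (nat \<Rightarrow> 'a \<Rightarrow> real) \<Rightarrow> nat \<Rightarrow> real" where
  "memFDR M d theta e alpha t = (\<integral>x. memFDP d theta e alpha t x \<partial>M)"

end

theory Submission
  imports Defs
begin

(* If delta_j = 1 then R_j = d R_(j-1) + 1 and R_t \<ge> d^(t-j) R_j, so every null term
   d^(t-j) delta_j / R_t of the FDP is at most delta_j / (d R_(j-1) + 1).  Since
   delta_j \<le> alpha_j e_j and alpha_j / (d R_(j-1) + 1) is F_(j-1)-measurable, validity of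
   e_j bounds the expectation of that term by E[alpha_j / (d R_(j-1) + 1)]; summing over
   the null hypotheses bounds mem-FDR(t) by E[mem-FDP*(t)]. *)

lemma delta_eq_0_or_1: "delta e alpha j x = 0 \<or> delta e alpha j x = 1"
  by (simp add: delta_def)

lemma delta_nonneg: "0 \<le> delta e alpha j x"
  by (simp add: delta_def)

lemma delta_le_alpha_mult_e:
  assumes "0 \<le> e j x" "0 \<le> alpha j x"
  shows "delta e alpha j x \<le> alpha j x * e j x"
  using assms by (auto simp: delta_def field_simps)

lemma Rd_Suc: "Rd d e alpha (Suc n) x = d * Rd d e alpha n x + delta e alpha (Suc n) x"
proof -
  have "(\<Sum>j\<in>{1..n}. d ^ (Suc n - j) * delta e alpha j x) = d * Rd d e alpha n x"
    unfolding Rd_def sum_distrib_left by (rule sum.cong) (auto simp: Suc_diff_le)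
  then show ?thesis
    unfolding Rd_def by simp
qed

lemma Rd_nonneg: "0 \<le> d \<Longrightarrow> 0 \<le> Rd d e alpha n x"
  unfolding Rd_def by (intro sum_nonneg mult_nonneg_nonneg delta_nonneg) auto

lemma power_mult_Rd_le_Rd_add:
  assumes "0 \<le> d"
  shows "d ^ k * Rd d e alpha j x \<le> Rd d e alpha (j + k) x"
proof (induction k)
  case 0
  then show ?case by simp
next
  case (Suc k)
  have "d ^ Suc k * Rd d e alpha j x \<le> d * Rd d e alpha (j + k) x"
    using mult_left_mono[OF Suc assms] by (simp add: mult.assoc)
  also have "\<dots> \<le> Rd d e alpha (j + Suc k) x"
    using Rd_Suc[of d e alpha "j + k" x] delta_nonneg[of e alpha "Suc (j + k)" x] by simp
  finally show ?case .
qed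

lemma discounted_delta_div_Rd_le:
  assumes "0 \<le> d" "j \<in> {1..t}"
  shows "d ^ (t - j) * delta e alpha j x / Rd d e alpha t x
           \<le> delta e alpha j x / (d * Rd d e alpha (j - 1) x + 1)"
proof (cases "delta e alpha j x = 0")
  case False
  then have delta_j: "delta e alpha j x = 1"
    using delta_eq_0_or_1 by metis
  define D where "D = d * Rd d e alpha (j - 1) x + 1"
  have "0 < D"
    unfolding D_def using Rd_nonneg[of d e alpha "j - 1" x] assms(1) by (simp add: add_nonneg_pos)
  have "Rd d e alpha j x = D"
    using Rd_Suc[of d e alpha "j - 1" x] delta_j assms(2) by (simp add: D_def)
  then have grow: "d ^ (t - j) * D \<le> Rd d e alpha t x"
    using power_mult_Rd_le_Rd_add[OF assms(1), of "t - j" e alpha j x] assms(2) by simp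
  have "d ^ (t - j) / Rd d e alpha t x \<le> 1 / D"
  proof (cases "d ^ (t - j) = 0")
    case False
    then have "0 < d ^ (t - j)"
      using zero_le_power[OF assms(1), of "t - j"] by linarith
    then have "0 < Rd d e alpha t x"
      using grow \<open>0 < D\<close> by (meson less_le_trans mult_pos_pos)
    with grow \<open>0 < D\<close> show ?thesis
      by (simp add: field_simps)
  next
    case True
    show ?thesis
      unfolding True using \<open>0 < D\<close> by simp
  qed
  then show ?thesis
    using delta_j by (simp add: D_def)
qed simp

lemma memFDP_le_sum_null_terms:
  assumes "0 \<le> d"
  shows "memFDP d theta e alpha t x
           \<le> (\<Sum>j\<in>H0 theta t. delta e alpha j x / (d * Rd d e alpha (j - 1) x + 1))"
  unfolding memFDP_def sum_divide_distrib
  by (intro sum_mono discounted_delta_div_Rd_le[OF assms]) (auto simp: H0_def)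

lemma memFDP_nonneg: "0 \<le> d \<Longrightarrow> 0 \<le> memFDP d theta e alpha t x"
  unfolding memFDP_def
  by (intro divide_nonneg_nonneg sum_nonneg mult_nonneg_nonneg Rd_nonneg delta_nonneg) auto

lemma sets_filt:
  "sets (filt M e alpha n) = sigma_sets (space M) {{x \<in> space M. delta e alpha j x = 1} | j. j \<in> {1..n}}"
  unfolding filt_def by (rule sets_measure_of) auto

lemma space_filt: "space (filt M e alpha n) = space M"
  unfolding filt_def by (simp add: space_measure_of_conv)

lemma delta_measurable_filt:
  assumes "i \<in> {1..n}"
  shows "delta e alpha i \<in> borel_measurable (filt M e alpha n)"
proof -
  let ?S = "{x \<in> space M. delta e alpha i x = 1}"
  have "?S \<in> sets (filt M e alpha n)"
    unfolding sets_filt using assms by (intro sigma_sets.Basic) auto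
  then have "indicator ?S \<in> borel_measurable (filt M e alpha n)"
    by simp
  moreover have "\<And>x. x \<in> space (filt M e alpha n) \<Longrightarrow> indicator ?S x = delta e alpha i x"
    unfolding space_filt using delta_eq_0_or_1[of e alpha i] by (auto simp: indicator_def)
  ultimately show ?thesis
    using measurable_cong by (metis (no_types, lifting))
qed

lemma Rd_measurable_filt: "Rd d e alpha n \<in> borel_measurable (filt M e alpha n)"
  unfolding Rd_def[abs_def] by (intro borel_measurable_sum borel_measurable_times
      borel_measurable_const delta_measurable_filt)

lemma subalgebra_filtI:
  assumes "\<And>i. i \<in> {1..n} \<Longrightarrow> delta e alpha i \<in> borel_measurable M"
  shows "subalgebra M (filt M e alpha n)"
proof -
  have "{{x \<in> space M. delta e alpha j x = 1} | j. j \<in> {1..n}} \<subseteq> sets M"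
    using assms by auto
  then show ?thesis
    unfolding subalgebra_def sets_filt space_filt by (simp add: sets.sigma_sets_subset)
qed

lemma (in sigma_finite_subalgebra) nn_integral_mult_le_of_nn_cond_exp_le_1:
  assumes "f \<in> borel_measurable F" "g \<in> borel_measurable M"
    and "AE x in M. nn_cond_exp M F g x \<le> 1"
  shows "(\<integral>\<^sup>+ x. f x * g x \<partial>M) \<le> (\<integral>\<^sup>+ x. f x \<partial>M)"
proof -
  have "(\<integral>\<^sup>+ x. f x * g x \<partial>M) = (\<integral>\<^sup>+ x. f x * nn_cond_exp M F g x \<partial>M)"
    using assms by (simp add: nn_cond_exp_intg)
  also have "\<dots> \<le> (\<integral>\<^sup>+ x. f x \<partial>M)"
    using assms(3) by (intro nn_integral_mono_AE) (auto elim!: eventually_mono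
        dest: mult_left_mono[of _ 1 "f _"])
  finally show ?thesis .
qed

locale online_e_testing = prob_space M for M :: "'a measure" +
  fixes e alpha :: "nat \<Rightarrow> 'a \<Rightarrow> real"
  assumes e_measurable: "e j \<in> borel_measurable M"
    and e_nonneg: "x \<in> space M \<Longrightarrow> 0 \<le> e j x"
    and alpha_nonneg: "x \<in> space M \<Longrightarrow> 0 \<le> alpha j x"
    and alpha_predictable: "1 \<le> j \<Longrightarrow> alpha j \<in> borel_measurable (filt M e alpha (j - 1))"
begin

lemma delta_measurable: "1 \<le> i \<Longrightarrow> delta e alpha i \<in> borel_measurable M"
proof (induction i rule: less_induct)
  case (less i)
  then have "subalgebra M (filt M e alpha (i - 1))"
    by (intro subalgebra_filtI) auto
  then have "alpha i \<in> borel_measurable M"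
    using alpha_predictable[OF less.prems] measurable_from_subalg by blast
  then show ?case
    unfolding delta_def[abs_def] using e_measurable by measurable
qed

lemma subalgebra_filt: "subalgebra M (filt M e alpha n)"
  by (intro subalgebra_filtI delta_measurable) auto

lemma Rd_measurable: "Rd d e alpha n \<in> borel_measurable M"
  using measurable_from_subalg[OF subalgebra_filt Rd_measurable_filt] .

lemma alpha_measurable: "1 \<le> j \<Longrightarrow> alpha j \<in> borel_measurable M"
  using measurable_from_subalg[OF subalgebra_filt alpha_predictable] .

lemma nn_integral_null_term_le:
  assumes "0 \<le> d" "1 \<le> j"
    and valid: "AE x in M. nn_cond_exp M (filt M e alpha (j - 1)) (\<lambda>y. ennreal (e j y)) x \<le> 1"
  shows "(\<integral>\<^sup>+ x. ennreal (delta e alpha j x / (d * Rd d e alpha (j - 1) x + 1)) \<partial>M)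
           \<le> (\<integral>\<^sup>+ x. ennreal (alpha j x / (d * Rd d e alpha (j - 1) x + 1)) \<partial>M)"
proof -
  interpret F: finite_measure_subalgebra M "filt M e alpha (j - 1)"
    by unfold_locales (rule subalgebra_filt)
  define w where "w x = alpha j x / (d * Rd d e alpha (j - 1) x + 1)" for x
  have den_pos: "0 < d * Rd d e alpha (j - 1) x + 1" for x
    using Rd_nonneg[of d e alpha "j - 1" x] assms(1) by (simp add: add_nonneg_pos)
  have "(\<lambda>x. ennreal (w x)) \<in> borel_measurable (filt M e alpha (j - 1))"
    unfolding w_def using alpha_predictable[OF assms(2)] Rd_measurable_filt by measurable
  note weighted = F.nn_integral_mult_le_of_nn_cond_exp_le_1[OF this _ valid]
  have "(\<integral>\<^sup>+ x. ennreal (delta e alpha j x / (d * Rd d e alpha (j - 1) x + 1)) \<partial>M)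
          \<le> (\<integral>\<^sup>+ x. ennreal (w x) * ennreal (e j x) \<partial>M)"
  proof (rule nn_integral_mono)
    fix x assume x: "x \<in> space M"
    have "0 \<le> w x"
      unfolding w_def using alpha_nonneg[OF x] den_pos[of x] by simp
    have "delta e alpha j x \<le> alpha j x * e j x"
      using x by (intro delta_le_alpha_mult_e e_nonneg alpha_nonneg)
    then have "delta e alpha j x / (d * Rd d e alpha (j - 1) x + 1) \<le> w x * e j x"
      unfolding w_def using den_pos[of x] by (simp add: divide_right_mono)
    then show "ennreal (delta e alpha j x / (d * Rd d e alpha (j - 1) x + 1))
                 \<le> ennreal (w x) * ennreal (e j x)"
      using \<open>0 \<le> w x\<close> by (simp add: ennreal_mult'[symmetric] ennreal_leI)
  qed
  also have "\<dots> \<le> (\<integral>\<^sup>+ x. ennreal (w x) \<partial>M)"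
    using weighted e_measurable by simp
  finally show ?thesis
    unfolding w_def .
qed

lemma nn_integral_memFDP_le_memFDP_star:
  assumes "0 \<le> d"
    and valid: "\<And>j. 1 \<le> j \<Longrightarrow> theta j = 0 \<Longrightarrow>
           AE x in M. nn_cond_exp M (filt M e alpha (j - 1)) (\<lambda>y. ennreal (e j y)) x \<le> 1"
  shows "(\<integral>\<^sup>+ x. ennreal (memFDP d theta e alpha t x) \<partial>M)
           \<le> (\<integral>\<^sup>+ x. ennreal (memFDP_star d theta e alpha t x) \<partial>M)"
proof -
  let ?g = "\<lambda>j x. delta e alpha j x / (d * Rd d e alpha (j - 1) x + 1)"
  let ?h = "\<lambda>j x. alpha j x / (d * Rd d e alpha (j - 1) x + 1)"
  have null: "1 \<le> j" "theta j = 0" if "j \<in> H0 theta t" for j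
    using that by (auto simp: H0_def)
  have den_nonneg: "0 \<le> d * Rd d e alpha n x + 1" for n x
    using Rd_nonneg[of d e alpha n x] assms(1) by simp
  have "(\<integral>\<^sup>+ x. ennreal (memFDP d theta e alpha t x) \<partial>M)
          \<le> (\<integral>\<^sup>+ x. (\<Sum>j\<in>H0 theta t. ennreal (?g j x)) \<partial>M)"
  proof (rule nn_integral_mono)
    fix x
    have "ennreal (memFDP d theta e alpha t x) \<le> ennreal (\<Sum>j\<in>H0 theta t. ?g j x)"
      using memFDP_le_sum_null_terms[OF assms(1)] by (rule ennreal_leI)
    then show "ennreal (memFDP d theta e alpha t x) \<le> (\<Sum>j\<in>H0 theta t. ennreal (?g j x))"
      using den_nonneg by (simp add: sum_ennreal delta_nonneg)
  qed
  also have "\<dots> = (\<Sum>j\<in>H0 theta t. \<integral>\<^sup>+ x. ennreal (?g j x) \<partial>M)"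
    using null delta_measurable Rd_measurable by (intro nn_integral_sum) auto
  also have "\<dots> \<le> (\<Sum>j\<in>H0 theta t. \<integral>\<^sup>+ x. ennreal (?h j x) \<partial>M)"
    using nn_integral_null_term_le[OF assms(1)] null valid by (intro sum_mono) auto
  also have "\<dots> = (\<integral>\<^sup>+ x. (\<Sum>j\<in>H0 theta t. ennreal (?h j x)) \<partial>M)"
    using null alpha_measurable Rd_measurable by (intro nn_integral_sum[symmetric]) auto
  also have "\<dots> = (\<integral>\<^sup>+ x. ennreal (memFDP_star d theta e alpha t x) \<partial>M)"
    unfolding memFDP_star_def using alpha_nonneg den_nonneg
    by (intro nn_integral_cong) (simp add: sum_ennreal)
  finally show ?thesis .
qed

lemma memFDR_eq_nn_integral:
  assumes "0 \<le> d"
  shows "memFDR M d theta e alpha t = enn2real (\<integral>\<^sup>+ x. ennreal (memFDP d theta e alpha t x) \<partial>M)"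
proof -
  have "memFDP d theta e alpha t \<in> borel_measurable M"
    unfolding memFDP_def[abs_def] H0_def using delta_measurable Rd_measurable by measurable
  then show ?thesis
    unfolding memFDR_def using memFDP_nonneg[OF assms] by (intro integral_eq_nn_integral AE_I2) auto
qed

end

theorem theorem2:
  fixes M :: "'a measure" and e alpha :: "nat \<Rightarrow> 'a \<Rightarrow> real"
    and theta :: "nat \<Rightarrow> nat" and lvl d :: real and t :: nat
  assumes "prob_space M"
    and "0 < lvl" and "lvl < 1"
    and "0 < d" and "d \<le> 1"
    and "\<And>j. theta j \<in> {0, 1}"
    and "\<And>j. e j \<in> borel_measurable M"
    and "\<And>j x. x \<in> space M \<Longrightarrow> 0 \<le> e j x"
    and "\<And>j x. x \<in> space M \<Longrightarrow> 0 \<le> alpha j x"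
    and "\<And>j. 1 \<le> j \<Longrightarrow> alpha j \<in> borel_measurable (filt M e alpha (j - 1))"
    and "\<And>j. 1 \<le> j \<Longrightarrow> theta j = 0 \<Longrightarrow>
           AE x in M. nn_cond_exp M (filt M e alpha (j - 1)) (\<lambda>y. ennreal (e j y)) x \<le> 1"
    and "1 \<le> t"
    and "(\<integral>\<^sup>+ x. ennreal (memFDP_star d theta e alpha t x) \<partial>M) \<le> ennreal lvl"
  shows "memFDR M d theta e alpha t \<le> lvl"
proof -
  interpret online_e_testing M e alpha
    using assms(1,7-10) by (simp add: online_e_testing_def online_e_testing_axioms_def)
  have d: "0 \<le> d"
    using assms(4) by simp
  have "(\<integral>\<^sup>+ x. ennreal (memFDP d theta e alpha t x) \<partial>M) \<le> ennreal lvl"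
    using nn_integral_memFDP_le_memFDP_star[OF d assms(11)] assms(13) by (rule order_trans)
  then have "enn2real (\<integral>\<^sup>+ x. ennreal (memFDP d theta e alpha t x) \<partial>M) \<le> lvl"
    using assms(2) enn2real_mono[of _ "ennreal lvl"] by fastforce
  then show ?thesis
    using memFDR_eq_nn_integral[OF d] by simp
qed

end
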